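(* Under the standing assumptions, if $0\le a\le 1/4$ then $z(\theta)$ is negative and strictly increasing on $(\pi/2,\pi)$.
   Context: Standing assumptions: $a,b\in\mathbb{R}$ with $b>0$, $1+a+b>0$, $9-27a+b>0$, $2-8a+8a^2+ab\ne0$, $b+1-a\ne0$. Let $f^*(\zeta,\theta)=(\zeta+2\cos\theta)(2\zeta\cos\theta+1)+b\zeta-a(\zeta+2\cos\theta)^3$. Under these assumptions, for each $\theta\in(\pi/2,\pi)$ the polynomial $f^*(\cdot,\theta)$ has exactly one real zero in $(-1,1)$; denote it $w(\theta)$ (so $\zeta(\theta)=1/w(\theta)$). Define $\tau(\theta)=-w(\theta)-2\cos\theta$ and $z(\theta)=-\dfrac{w(\theta)}{\tau(\theta)^3}$ (i.e. $z=-1/(\zeta\tau^3)$). *)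

theory Defs
  imports Complex_Main
begin

definition fstar :: "real \<Rightarrow> real \<Rightarrow> real \<Rightarrow> real \<Rightarrow> real" where
  "fstar a b \<zeta> \<theta> =
     (\<zeta> + 2 * cos \<theta>) * (2 * \<zeta> * cos \<theta> + 1) + b * \<zeta> - a * (\<zeta> + 2 * cos \<theta>) ^ 3"

definition wz :: "real \<Rightarrow> real \<Rightarrow> real \<Rightarrow> real" where
  "wz a b \<theta> = (THE w. w \<in> {-1<..<1} \<and> fstar a b w \<theta> = 0)"

definition tau :: "real \<Rightarrow> real \<Rightarrow> real \<Rightarrow> real" where
  "tau a b \<theta> = - wz a b \<theta> - 2 * cos \<theta>"

definition zfun :: "real \<Rightarrow> real \<Rightarrow> real \<Rightarrow> real" where
  "zfun a b \<theta> = - wz a b \<theta> / (tau a b \<theta>) ^ 3"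

end

theory Submission
  imports Defs
begin

text \<open>Write \<open>c = cos \<theta> \<in> (-1,0)\<close>. For \<open>0 \<le> a \<le> 1/4\<close> the cubic \<open>f\<^sup>*(\<cdot>,\<theta>)\<close> is strictly
  increasing on \<open>[-1,1]\<close>, and comparing with its values at \<open>0\<close> and \<open>-2c\<close> puts the root in
  \<open>0 < w < -2c\<close>, i.e. \<open>w > 0\<close> and \<open>\<tau> > 0\<close>. In terms of \<open>\<tau>\<close> the equation reads
  \<open>\<tau>w\<^sup>2 + w\<tau>\<^sup>2 + a\<tau>\<^sup>3 - \<tau> + bw = 0\<close>, so the ratio \<open>p = -w/\<tau> < 0\<close> satisfies
  \<open>\<tau>\<^sup>2(p\<^sup>2 - p + a) = 1 + bp\<close>. Since \<open>c = \<tau>(p - 1)/2\<close> and \<open>z = p/\<tau>\<^sup>2\<close>, both \<open>c\<^sup>2\<close> and \<open>z\<close>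
  become explicit rational functions of \<open>p\<close>, which are strictly increasing for \<open>-1/b < p < 0\<close>.
  As \<open>c\<^sup>2\<close> increases with \<open>\<theta>\<close> on \<open>(\<pi>/2,\<pi>)\<close>, so does \<open>p\<close>, hence so does \<open>z\<close>.\<close>

lemma cos_gt_minus_one_lt_zero:
  assumes "\<theta> \<in> {pi/2<..<pi}"
  shows "-1 < cos \<theta>" "cos \<theta> < 0"
proof -
  have "cos pi < cos \<theta>" using assms by (intro cos_monotone_0_pi) auto
  then show "-1 < cos \<theta>" by simp
  have "cos \<theta> < cos (pi/2)" using assms by (intro cos_monotone_0_pi) auto
  then show "cos \<theta> < 0" by simp
qed

lemma cos_squared_strict_mono_on: "strict_mono_on {pi/2..pi} (\<lambda>\<theta>. (cos \<theta>)^2)"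
proof (rule strict_mono_onI)
  fix r s assume "r \<in> {pi/2..pi}" "s \<in> {pi/2..pi}" "r < s"
  then have "cos s < cos r" by (intro cos_monotone_0_pi) auto
  moreover have "cos r \<le> cos (pi/2)"
    using \<open>r \<in> {pi/2..pi}\<close> by (intro cos_monotone_0_pi_le) auto
  ultimately have "(- cos r)^2 < (- cos s)^2"
    by (intro power_strict_mono) auto
  then show "(cos r)^2 < (cos s)^2" by simp
qed

lemma fstar_strict_mono_on:
  assumes "0 \<le> a" "a \<le> 1/4" "b > 0"
  shows "strict_mono_on {-1..1} (\<lambda>w. fstar a b w \<theta>)"
proof (rule strict_mono_onI)
  fix x y :: real assume "x \<in> {-1..1}" "y \<in> {-1..1}" "x < y"
  then have "x^2 \<le> 1" "y^2 \<le> 1" by (auto simp: abs_square_le_1)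
  define X Y where "X = x + 2 * cos \<theta>" and "Y = y + 2 * cos \<theta>"
  define K where "K = (X^2 + Y^2) - 2*a*(X^2 + X*Y + Y^2) + (2 - x^2 - y^2) + 2*b"
  have diff: "2 * (fstar a b y \<theta> - fstar a b x \<theta>) = (y - x) * K"
    unfolding fstar_def K_def X_def Y_def
    by (simp add: power2_eq_square power3_eq_cube algebra_simps)
  have "X^2 + X*Y + Y^2 = (X + Y/2)^2 + 3*Y^2/4"
    by (simp add: algebra_simps power2_eq_square)
  then have "a * (X^2 + X*Y + Y^2) \<le> 1/4 * (X^2 + X*Y + Y^2)"
    using assms(2) by (intro mult_right_mono) simp_all
  moreover have "(X^2 + Y^2) - 1/2 * (X^2 + X*Y + Y^2) = ((X - Y)^2 + X^2 + Y^2) / 4"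
    by (simp add: algebra_simps power2_eq_square)
  moreover have "0 \<le> ((X - Y)^2 + X^2 + Y^2) / 4" by simp
  ultimately have "K > 0"
    unfolding K_def using \<open>x^2 \<le> 1\<close> \<open>y^2 \<le> 1\<close> \<open>b > 0\<close> by linarith
  with \<open>x < y\<close> diff show "fstar a b x \<theta> < fstar a b y \<theta>"
    by (smt (verit) mult_pos_pos)
qed

lemma fstar_values:
  "fstar a b (-1) \<theta> = (1 - 2 * cos \<theta>)^2 * (a * (1 - 2 * cos \<theta>) - 1) - b"
  "fstar a b 0 \<theta> = 2 * cos \<theta> * (1 - 4 * a * (cos \<theta>)^2)"
  "fstar a b 1 \<theta> = (1 + 2 * cos \<theta>)^2 * (1 - a * (1 + 2 * cos \<theta>)) + b"
  "fstar a b (- 2 * cos \<theta>) \<theta> = - 2 * b * cos \<theta>"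
  unfolding fstar_def by (simp_all add: algebra_simps power2_eq_square power3_eq_cube)

lemma fstar_unique_root:
  assumes "-1 < cos \<theta>" "cos \<theta> < 0" "0 \<le> a" "a \<le> 1/4" "b > 0"
  shows "\<exists>!w. w \<in> {-1<..<1} \<and> fstar a b w \<theta> = 0"
proof -
  have "a * (1 - 2 * cos \<theta>) \<le> a * 3" using assms by (intro mult_left_mono) auto
  then have "a * (1 - 2 * cos \<theta>) - 1 < 0" using assms by linarith
  then have "(1 - 2 * cos \<theta>)^2 * (a * (1 - 2 * cos \<theta>) - 1) < 0"
    using assms by (intro mult_pos_neg) auto
  then have neg: "fstar a b (-1) \<theta> < 0" using \<open>b > 0\<close> by (simp add: fstar_values)
  have "a * (1 + 2 * cos \<theta>) \<le> a * 1" using assms by (intro mult_left_mono) auto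
  then have "0 \<le> (1 + 2 * cos \<theta>)^2 * (1 - a * (1 + 2 * cos \<theta>))"
    using assms by (intro mult_nonneg_nonneg) auto
  then have pos: "fstar a b 1 \<theta> > 0" using \<open>b > 0\<close> by (simp add: fstar_values)
  have "continuous_on {-1..1} (\<lambda>w. fstar a b w \<theta>)"
    unfolding fstar_def by (intro continuous_intros)
  then obtain w where "-1 \<le> w" "w \<le> 1" "fstar a b w \<theta> = 0"
    using IVT'[of "\<lambda>w. fstar a b w \<theta>" "-1" 0 1] neg pos by force
  moreover from this have "w \<noteq> -1" "w \<noteq> 1" using neg pos by auto
  ultimately have root: "w \<in> {-1<..<1} \<and> fstar a b w \<theta> = 0" by auto
  show ?thesis
  proof (rule ex1I[of _ w])
    fix v assume "v \<in> {-1<..<1} \<and> fstar a b v \<theta> = 0"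
    with root show "v = w"
      using strict_mono_on_eq[OF fstar_strict_mono_on[OF assms(3-5), where \<theta> = \<theta>], of v w] by auto
  qed (fact root)
qed

lemma fstar_root_bounds:
  assumes "-1 < cos \<theta>" "cos \<theta> < 0" "0 \<le> a" "a \<le> 1/4" "b > 0"
    and "w \<in> {-1<..<1}" "fstar a b w \<theta> = 0"
  shows "0 < w" "w + 2 * cos \<theta> < 0"
proof -
  note mono = strict_mono_on_less[OF fstar_strict_mono_on[OF assms(3-5), where \<theta> = \<theta>]]
  have "(cos \<theta>)^2 < 1" using assms by (simp add: abs_square_less_1)
  moreover have "a * (cos \<theta>)^2 \<le> 1/4 * (cos \<theta>)^2"
    using \<open>a \<le> 1/4\<close> by (intro mult_right_mono) simp_all
  ultimately have "1 - 4 * a * (cos \<theta>)^2 > 0" by linarith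
  then have "fstar a b 0 \<theta> < fstar a b w \<theta>"
    using assms by (simp add: fstar_values mult_neg_pos)
  then show "0 < w" using mono[of 0 w] assms(6) by simp
  show "w + 2 * cos \<theta> < 0"
  proof (cases "- 2 * cos \<theta> < 1")
    case True
    have "0 < fstar a b (- 2 * cos \<theta>) \<theta>"
      unfolding fstar_values using assms by (simp add: mult_pos_neg)
    then have "fstar a b w \<theta> < fstar a b (- 2 * cos \<theta>) \<theta>"
      using assms by simp
    then show ?thesis using mono[of w "- 2 * cos \<theta>"] assms True by simp
  qed (use assms in simp)
qed

lemma wz_root:
  assumes "\<theta> \<in> {pi/2<..<pi}" "0 \<le> a" "a \<le> 1/4" "b > 0"
  shows "wz a b \<theta> \<in> {-1<..<1}" "fstar a b (wz a b \<theta>) \<theta> = 0"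
  using theI'[OF fstar_unique_root[OF cos_gt_minus_one_lt_zero[OF assms(1)] assms(2-4)]]
  unfolding wz_def by auto

definition cos_sq_param :: "real \<Rightarrow> real \<Rightarrow> real \<Rightarrow> real" where
  "cos_sq_param a b p = (p - 1)^2 * (1 + b*p) / (4 * (p^2 - p + a))"

definition z_param :: "real \<Rightarrow> real \<Rightarrow> real \<Rightarrow> real" where
  "z_param a b p = p * (p^2 - p + a) / (1 + b*p)"

lemma quadratic_pos_of_neg: "p < 0 \<Longrightarrow> 0 \<le> (a::real) \<Longrightarrow> p^2 - p + a > 0"
  by (smt (verit) zero_le_power2)

lemma root_parametrization:
  assumes "0 \<le> a" "fstar a b w \<theta> = 0" "0 < w" "w + 2 * cos \<theta> < 0"
  defines "\<tau> \<equiv> - w - 2 * cos \<theta>"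
  defines "p \<equiv> - w / \<tau>"
  shows "p < 0" "1 + b*p > 0" "(cos \<theta>)^2 = cos_sq_param a b p" "- w / \<tau>^3 = z_param a b p"
proof -
  have "\<tau> > 0" using assms(4) unfolding \<tau>_def by simp
  then show "p < 0" unfolding p_def using \<open>0 < w\<close> by simp
  then have pos: "p^2 - p + a > 0" using quadratic_pos_of_neg \<open>0 \<le> a\<close> by blast
  have "\<tau>*w^2 + w*\<tau>^2 + a*\<tau>^3 - \<tau> + b*w = fstar a b w \<theta>"
    unfolding fstar_def \<tau>_def by (simp add: algebra_simps power2_eq_square power3_eq_cube)
  then have root: "\<tau>*w^2 + w*\<tau>^2 + a*\<tau>^3 - \<tau> + b*w = 0"
    using \<open>fstar a b w \<theta> = 0\<close> by simp
  have "\<tau>^2 * (p^2 - p + a) - (1 + b*p) = (\<tau>*w^2 + w*\<tau>^2 + a*\<tau>^3 - \<tau> + b*w) / \<tau>"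
    unfolding p_def using \<open>\<tau> > 0\<close> by (simp add: field_simps power2_eq_square power3_eq_cube)
  then have tau_sq: "\<tau>^2 = (1 + b*p) / (p^2 - p + a)"
    unfolding root using pos by (simp add: field_simps)
  then have "1 + b*p = \<tau>^2 * (p^2 - p + a)" using pos by simp
  then show "1 + b*p > 0" using pos \<open>\<tau> > 0\<close> by simp
  have cos_eq: "cos \<theta> = \<tau> * (p - 1) / 2"
    unfolding p_def using \<open>\<tau> > 0\<close> \<tau>_def by (simp add: field_simps)
  have "(cos \<theta>)^2 = \<tau>^2 * (p - 1)^2 / 4"
    unfolding cos_eq by (simp add: power_mult_distrib power_divide)
  then show "(cos \<theta>)^2 = cos_sq_param a b p"
    unfolding tau_sq cos_sq_param_def using pos by (simp add: field_simps)
  have "- w / \<tau>^3 = p / \<tau>^2"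
    unfolding p_def using \<open>\<tau> > 0\<close> by (simp add: field_simps power2_eq_square power3_eq_cube)
  also have "\<dots> = z_param a b p"
    unfolding tau_sq z_param_def using pos \<open>1 + b*p > 0\<close> by (simp add: field_simps)
  finally show "- w / \<tau>^3 = z_param a b p" .
qed

lemma has_real_derivative_cos_sq_param:
  assumes "p^2 - p + a \<noteq> 0"
  shows "(cos_sq_param a b has_real_derivative
     (p - 1) * (b*p^3 - b*p^2 + (1 + 3*a*b)*p + 2*a - a*b - 1) / (4 * (p^2 - p + a)^2)) (at p)"
  unfolding cos_sq_param_def
  apply (rule derivative_eq_intros refl)+
  using assms apply simp
  using assms apply (simp add: divide_simps)
  apply (simp add: algebra_simps power2_eq_square power3_eq_cube)
  done

lemma has_real_derivative_z_param:
  assumes "1 + b*p \<noteq> 0"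
  shows "(z_param a b has_real_derivative (2*b*p^3 + (3 - b)*p^2 - 2*p + a) / (1 + b*p)^2) (at p)"
  unfolding z_param_def
  apply (rule derivative_eq_intros refl)+
  using assms apply simp
  using assms apply (simp add: divide_simps)
  apply (simp add: algebra_simps power2_eq_square power3_eq_cube)
  done

lemma cos_sq_param_strict_mono_on:
  assumes "0 \<le> a" "a \<le> 1/2" "0 \<le> b"
  shows "strict_mono_on {..<0} (cos_sq_param a b)"
proof (rule strict_mono_onI)
  fix p q :: real assume "p \<in> {..<0}" "q \<in> {..<0}" "p < q"
  show "cos_sq_param a b p < cos_sq_param a b q"
  proof (rule DERIV_pos_imp_increasing[OF \<open>p < q\<close>])
    fix x assume "p \<le> x" "x \<le> q"
    then have "x < 0" using \<open>q \<in> {..<0}\<close> by simp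
    have "b * x^3 \<le> 0"
      using \<open>x < 0\<close> \<open>0 \<le> b\<close> by (simp add: mult_nonneg_nonpos power3_eq_cube mult_neg_neg)
    moreover have "0 \<le> b * x^2" "0 \<le> a * b" using assms by simp_all
    moreover from this have "(1 + 3*a*b) * x < 0"
      using \<open>x < 0\<close> by (intro mult_pos_neg) auto
    ultimately have "b*x^3 - b*x^2 + (1 + 3*a*b)*x + 2*a - a*b - 1 < 0"
      using \<open>a \<le> 1/2\<close> by linarith
    then have "(x - 1) * (b*x^3 - b*x^2 + (1 + 3*a*b)*x + 2*a - a*b - 1) > 0"
      using \<open>x < 0\<close> by (intro mult_neg_neg) auto
    moreover have "x^2 - x + a > 0" using quadratic_pos_of_neg \<open>x < 0\<close> \<open>0 \<le> a\<close> by blast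
    ultimately show "\<exists>y. DERIV (cos_sq_param a b) x :> y \<and> 0 < y"
      using has_real_derivative_cos_sq_param[of x a b]
      by (metis divide_pos_pos less_irrefl mult_pos_pos zero_less_numeral zero_less_power)
  qed
qed

lemma z_param_strict_mono_on:
  assumes "0 \<le> a" "b > 0"
  shows "strict_mono_on {-1/b<..<0} (z_param a b)"
proof (rule strict_mono_onI)
  fix p q :: real assume "p \<in> {-1/b<..<0}" "q \<in> {-1/b<..<0}" "p < q"
  show "z_param a b p < z_param a b q"
  proof (rule DERIV_pos_imp_increasing[OF \<open>p < q\<close>])
    fix x assume "p \<le> x" "x \<le> q"
    then have "x \<in> {-1/b<..<0}" using \<open>p \<in> {-1/b<..<0}\<close> \<open>q \<in> {-1/b<..<0}\<close> by auto
    then have "x < 0" "1 + b*x > 0" using \<open>b > 0\<close> by (auto simp: field_simps)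
    have "2*b*x^3 + (3 - b)*x^2 - 2*x + a = 2*x^2*(1 + b*x) + x^2 + (-x)*(b*x + 2) + a"
      by (simp add: algebra_simps power2_eq_square power3_eq_cube)
    moreover have "0 \<le> 2*x^2*(1 + b*x)" using \<open>1 + b*x > 0\<close> by simp
    moreover have "0 < (-x)*(b*x + 2)" using \<open>x < 0\<close> \<open>1 + b*x > 0\<close> by (intro mult_pos_pos) auto
    ultimately have "2*b*x^3 + (3 - b)*x^2 - 2*x + a > 0"
      using \<open>0 \<le> a\<close> zero_le_power2[of x] by linarith
    then show "\<exists>y. DERIV (z_param a b) x :> y \<and> 0 < y"
      using has_real_derivative_z_param[of b x a] \<open>1 + b*x > 0\<close>
      by (metis divide_pos_pos less_irrefl zero_less_power)
  qed
qed

lemma z_param_neg: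
  assumes "0 \<le> a" "b > 0" "p \<in> {-1/b<..<0}"
  shows "z_param a b p < 0"
proof -
  have "p < 0" "1 + b*p > 0" using assms by (auto simp: field_simps)
  moreover have "p^2 - p + a > 0" using quadratic_pos_of_neg \<open>p < 0\<close> \<open>0 \<le> a\<close> by blast
  ultimately show ?thesis unfolding z_param_def by (simp add: divide_neg_pos mult_neg_pos)
qed

lemma zfun_parametrization:
  assumes "\<theta> \<in> {pi/2<..<pi}" "0 \<le> a" "a \<le> 1/4" "b > 0"
  obtains p where "p \<in> {-1/b<..<0}" "(cos \<theta>)^2 = cos_sq_param a b p" "zfun a b \<theta> = z_param a b p"
proof -
  note cos_bounds = cos_gt_minus_one_lt_zero[OF assms(1)]
  note root = wz_root[OF assms]
  note param = root_parametrization[OF assms(2) root(2)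
      fstar_root_bounds[OF cos_bounds assms(2-4) root]]
  have "zfun a b \<theta> = - wz a b \<theta> / (- wz a b \<theta> - 2 * cos \<theta>)^3"
    unfolding zfun_def tau_def ..
  with param \<open>b > 0\<close> show thesis by (intro that) (auto simp: field_simps)
qed

theorem mainTheorem15:
  fixes a b :: real
  assumes "b > 0" and "1 + a + b > 0" and "9 - 27 * a + b > 0"
    and "2 - 8 * a + 8 * a ^ 2 + a * b \<noteq> 0" and "b + 1 - a \<noteq> 0"
    and "0 \<le> a" and "a \<le> 1 / 4"
  shows "(\<forall>\<theta> \<in> {pi / 2 <..< pi}. zfun a b \<theta> < 0) \<and>
         strict_mono_on {pi / 2 <..< pi} (zfun a b)"
proof
  note param = zfun_parametrization[OF _ \<open>0 \<le> a\<close> \<open>a \<le> 1/4\<close> \<open>b > 0\<close>]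
  show "\<forall>\<theta> \<in> {pi / 2 <..< pi}. zfun a b \<theta> < 0"
    using param z_param_neg[OF \<open>0 \<le> a\<close> \<open>b > 0\<close>] by metis
  show "strict_mono_on {pi / 2 <..< pi} (zfun a b)"
  proof (rule strict_mono_onI)
    fix r s assume r: "r \<in> {pi / 2 <..< pi}" and s: "s \<in> {pi / 2 <..< pi}" and "r < s"
    obtain p where p: "p \<in> {-1/b<..<0}" "(cos r)^2 = cos_sq_param a b p" "zfun a b r = z_param a b p"
      using param[OF r] .
    obtain q where q: "q \<in> {-1/b<..<0}" "(cos s)^2 = cos_sq_param a b q" "zfun a b s = z_param a b q"
      using param[OF s] .
    have "cos_sq_param a b p < cos_sq_param a b q"
      using strict_mono_onD[OF cos_squared_strict_mono_on, of r s] r s \<open>r < s\<close> p q by simp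
    then have "p < q"
      using strict_mono_on_less[OF cos_sq_param_strict_mono_on, of a b p q] assms p q by simp
    then show "zfun a b r < zfun a b s"
      using strict_mono_onD[OF z_param_strict_mono_on[OF \<open>0 \<le> a\<close> \<open>b > 0\<close>]] p q by simp
  qed
qed

end
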